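(* Let $\mathcal T$, $e_0$, $\mathcal T_0$, $\mathcal T_1$, the coordinate $x$, the set $\sigma_1$, the function $\mu^-(\lambda)$ and the functions $U(x,\lambda)$, $V(x,\lambda)$ on $[0,1]$ be as in the context. If $\lambda\in\mathbb C\setminus\sigma_1$, then $V(\cdot,\lambda)$ may be extended to a solution of $-y''=\lambda y$ on $\mathcal T_0$, depending only on $x\in[0,\infty)$, which is continuous and satisfies the jump conditions $y'(x^+)=y'(x^-)/\delta_R$ for even integers $x>0$ and $y'(x^+)=y'(x^-)/\delta_B$ for odd integers $x>0$ (hence the vertex conditions $\sum_{e\sim v}\partial_\nu y_e(v)=0$ at all vertices of $\mathcal T_0$ with $x>0$), and this extension is square integrable on $\mathcal T_0$. Analogously, $U(\cdot,\lambda)$ may be extended to a solution of $-y''=\lambda y$ on $\mathcal T_1$, depending only on $x\in(-\infty,1]$, which is continuous and satisfies $y'(x^-)=y'(x^+)/\delta_R$ for even integers $x<1$ and $y'(x^-)=y'(x^+)/\delta_B$ for odd integers $x<1$ (hence the vertex conditions at all vertices of $\mathcal T_1$ with $x<1$), and this extension is square integrable on $\mathcal T_1$.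
   Context: $\mathcal T$ is the infinite biregular tree: vertices split into classes $\mathcal V_R,\mathcal V_B$, each edge joins $\mathcal V_R$ to $\mathcal V_B$, vertices in $\mathcal V_B$ have degree $\delta_B+1$ and in $\mathcal V_R$ degree $\delta_R+1$ ($\delta_B,\delta_R\ge1$ integers); every edge is identified with $[0,1]$. Fix an edge $e_0=\{r_0,b_0\}$ with $r_0\in\mathcal V_R$, identified with $[0,1]$ so that $r_0\leftrightarrow0$, $b_0\leftrightarrow1$. $\mathcal T_0$ is the union of all nonbacktracking rays with vertex sequence $r_0,b_0,r_1,b_1,\dots$; a point of $\mathcal T_0$ gets coordinate $x\in[0,\infty)$ = its distance from $r_0$ (so even integers are $R$-vertices, odd integers $B$-vertices). $\mathcal T_1$ is the union of all nonbacktracking rays with vertex sequence $b_0,r_0,b_{-1},r_{-1},\dots$; a point gets coordinate $x=1-(\text{distance from }b_0)\in(-\infty,1]$. With $\omega=\sqrt\lambda$ put $c=\cos\omega$, $c'=-\omega\sin\omega$, $s=\sin\omega/\omega$, $s'=\cos\omega$, $M_0=\begin{pmatrix}c&s\\c'&s'\end{pmatrix}$, $J_B=\operatorname{diag}(1,1/\delta_B)$, $J_R=\operatorname{diag}(1,1/\delta_R)$, $T_0(\lambda)=J_RM_0J_BM_0$, and $\sigma_1=\{\lambda\in\mathbb C: T_0(\lambda)$ has an eigenvalue of modulus $(\delta_B\delta_R)^{-1/2}\}$. On $\mathbb C\setminus\sigma_1$, $\mu^-(\lambda)$ denotes the analytic choice of eigenvalue of $T_0(\lambda)$ with $|\mu^-(\lambda)|<(\delta_B\delta_R)^{-1/2}$.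 For $x\in[0,1]$, $V(x,\lambda)=sc(1+\tfrac1{\delta_B})\cos(\omega x)+[\mu^--c^2-\tfrac{sc'}{\delta_B}]\tfrac{\sin(\omega x)}{\omega}$ and $U(x,\lambda)=-sc(1+\tfrac1{\delta_R})\cos(\omega(1-x))-[\mu^--c^2-\tfrac{sc'}{\delta_R}]\tfrac{\sin(\omega(1-x))}{\omega}$. *)

theory Defs
  imports "HOL-Analysis.Analysis"
begin

definition mat2 :: "complex \<Rightarrow> complex \<Rightarrow> complex \<Rightarrow> complex \<Rightarrow> complex^2^2" where
  "mat2 a b c d = (\<chi> i j. if i = 1 then (if j = 1 then a else b) else (if j = 1 then c else d))"

definition is_eigenvalue :: "complex^2^2 \<Rightarrow> complex \<Rightarrow> bool" where
  "is_eigenvalue A \<mu> \<longleftrightarrow> (\<exists>v. v \<noteq> 0 \<and> A *v v = \<mu> *s v)"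

(* omega = sqrt lambda (principal branch; all quantities below are even in omega) *)
definition om :: "complex \<Rightarrow> complex" where "om la = csqrt la"

definition sn :: "complex \<Rightarrow> complex \<Rightarrow> complex" where
  "sn w t = (if w = 0 then t else sin (w * t) / w)"

definition cc :: "complex \<Rightarrow> complex" where "cc la = cos (om la)"
definition cc' :: "complex \<Rightarrow> complex" where "cc' la = - om la * sin (om la)"
definition ss :: "complex \<Rightarrow> complex" where "ss la = sn (om la) 1"
definition ss' :: "complex \<Rightarrow> complex" where "ss' la = cos (om la)"

definition M0 :: "complex \<Rightarrow> complex^2^2" where
  "M0 la = mat2 (cc la) (ss la) (cc' la) (ss' la)"

definition Jmat :: "nat \<Rightarrow> complex^2^2" where
  "Jmat \<delta> = mat2 1 0 0 (1 / of_nat \<delta>)"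

definition T0 :: "nat \<Rightarrow> nat \<Rightarrow> complex \<Rightarrow> complex^2^2" where
  "T0 \<delta>B \<delta>R la = Jmat \<delta>R ** M0 la ** Jmat \<delta>B ** M0 la"

definition sigma1 :: "nat \<Rightarrow> nat \<Rightarrow> complex set" where
  "sigma1 \<delta>B \<delta>R = {la. \<exists>\<mu>. is_eigenvalue (T0 \<delta>B \<delta>R la) \<mu> \<and>
                              cmod \<mu> = 1 / sqrt (real (\<delta>B * \<delta>R))}"

(* the eigenvalue of T_0(lambda) of modulus < (delta_B delta_R)^(-1/2) (unique off sigma1) *)
definition mu_minus :: "nat \<Rightarrow> nat \<Rightarrow> complex \<Rightarrow> complex" where
  "mu_minus \<delta>B \<delta>R la = (THE \<mu>. is_eigenvalue (T0 \<delta>B \<delta>R la) \<mu> \<and>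
                              cmod \<mu> < 1 / sqrt (real (\<delta>B * \<delta>R)))"

definition Vfun :: "nat \<Rightarrow> nat \<Rightarrow> real \<Rightarrow> complex \<Rightarrow> complex" where
  "Vfun \<delta>B \<delta>R x la =
     ss la * cc la * (1 + 1 / of_nat \<delta>B) * cos (om la * of_real x)
     + (mu_minus \<delta>B \<delta>R la - (cc la)\<^sup>2 - ss la * cc' la / of_nat \<delta>B) * sn (om la) (of_real x)"

definition Ufun :: "nat \<Rightarrow> nat \<Rightarrow> real \<Rightarrow> complex \<Rightarrow> complex" where
  "Ufun \<delta>B \<delta>R x la =
     - ss la * cc la * (1 + 1 / of_nat \<delta>R) * cos (om la * of_real (1 - x))
     - (mu_minus \<delta>B \<delta>R la - (cc la)\<^sup>2 - ss la * cc' la / of_nat \<delta>R) * sn (om la) (of_real (1 - x))"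

(* Number of edges of T_0 lying at coordinate level [n, n+1]:
   1 edge at [0,1]; each B-vertex (odd x) branches into delta_B forward edges,
   each R-vertex (even x > 0) into delta_R forward edges. *)
definition edges0 :: "nat \<Rightarrow> nat \<Rightarrow> nat \<Rightarrow> nat" where
  "edges0 \<delta>B \<delta>R n = \<delta>B ^ ((n + 1) div 2) * \<delta>R ^ (n div 2)"

(* Number of edges of T_1 lying at coordinate level [-k, 1-k]:
   1 edge at [0,1]; each R-vertex (even x < 1) branches into delta_R backward edges,
   each B-vertex (odd x < 1) into delta_B backward edges. *)
definition edges1 :: "nat \<Rightarrow> nat \<Rightarrow> nat \<Rightarrow> nat" where
  "edges1 \<delta>B \<delta>R k = \<delta>R ^ ((k + 1) div 2) * \<delta>B ^ (k div 2)"

(* A function y on T_0 depending only on x is determined by Y : [0,oo) -> C;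
   its L^2 norm squared on T_0 is  sum_n edges0 n * int_n^{n+1} |Y|^2. *)
definition weight0 :: "nat \<Rightarrow> nat \<Rightarrow> real \<Rightarrow> real" where
  "weight0 \<delta>B \<delta>R x = real (edges0 \<delta>B \<delta>R (nat \<lfloor>x\<rfloor>))"

(* for x in (-oo,1]: the edge [-k,1-k] containing x (a.e.) has k = nat (1 - ceiling x) *)
definition weight1 :: "nat \<Rightarrow> nat \<Rightarrow> real \<Rightarrow> real" where
  "weight1 \<delta>B \<delta>R x = real (edges1 \<delta>B \<delta>R (nat (1 - \<lceil>x\<rceil>)))"

definition jump_coeff :: "nat \<Rightarrow> nat \<Rightarrow> nat \<Rightarrow> complex" where
  "jump_coeff \<delta>B \<delta>R n = (if even n then of_nat \<delta>R else of_nat \<delta>B)"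

end

theory Submission
  imports Defs
begin

text \<open>
  Since \<open>det T\<^sub>0(\<lambda>) = 1/(\<delta>\<^sub>B \<delta>\<^sub>R)\<close>, the moduli of the two eigenvalues of \<open>T\<^sub>0(\<lambda>)\<close>
  multiply to \<open>r\<^sup>2\<close> with \<open>r = (\<delta>\<^sub>B \<delta>\<^sub>R)\<^bsup>-1/2\<^esup>\<close>; off \<open>\<sigma>\<^sub>1\<close> exactly one of them, \<open>\<mu>\<^sup>-\<close>,
  lies inside the circle of radius \<open>r\<close>. Crossing one period of \<open>\<T>\<^sub>0\<close>, a B-edge followed by
  an R-edge, maps the Cauchy data \<open>(y, y')\<close> of a radial solution at an R-vertex to their image
  under \<open>T\<^sub>0(\<lambda>)\<close>, the vertex conditions contributing the factors \<open>J\<close>. The Cauchy data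
  \<open>(b, \<mu>\<^sup>- - a)\<close> of \<open>V\<close> at \<open>x = 0\<close> form an eigenvector of \<open>T\<^sub>0(\<lambda>) = [[a, b], [c, d]]\<close>
  for \<open>\<mu>\<^sup>-\<close>, so the solution is multiplied by \<open>\<mu>\<^sup>-\<close> per period while the number of edges
  is multiplied by \<open>\<delta>\<^sub>B \<delta>\<^sub>R\<close>. The \<open>L\<^sup>2\<close> mass of the \<open>n\<close>-th level is therefore
  \<open>O((|\<mu>\<^sup>-|\<^sup>2 \<delta>\<^sub>B \<delta>\<^sub>R)\<^bsup>n div 2\<^esup>)\<close>, a convergent geometric series. On \<open>\<T>\<^sub>1\<close> the roles of
  \<open>\<delta>\<^sub>B\<close> and \<open>\<delta>\<^sub>R\<close> are exchanged: \<open>U\<close> is the reflection \<open>x \<mapsto> 1 - x\<close> of the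
  radial solution for the swapped degrees, whose transfer matrix \<open>J\<^sub>B M\<^sub>0 J\<^sub>R M\<^sub>0\<close> has the
  same eigenvalues as \<open>T\<^sub>0(\<lambda>) = J\<^sub>R M\<^sub>0 J\<^sub>B M\<^sub>0\<close>.
\<close>

section \<open>Analysis on the half-line\<close>

lemma continuous_on_atLeast_0_from_unit_intervals:
  fixes f :: "real \<Rightarrow> 'a::topological_space"
  assumes pieces: "\<And>n::nat. continuous_on {real n..real n + 1} f"
  shows "continuous_on {0..} f"
proof -
  have initial: "continuous_on {0..real N} f" for N
  proof (induction N)
    case (Suc N)
    have "continuous_on ({0..real N} \<union> {real N..real N + 1}) f"
      using Suc pieces by (intro continuous_on_closed_Un) auto
    moreover have "{0..real N} \<union> {real N..real N + 1} = {0..real (Suc N)}"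
      by auto
    ultimately show ?case
      by simp
  qed simp
  show ?thesis
    unfolding continuous_on_eq_continuous_within
  proof
    fix x :: real
    assume "x \<in> {0..}"
    define N where "N = nat \<lceil>x\<rceil> + 1"
    have "x < real N"
      unfolding N_def by linarith
    then have "at x within {0..} = at x within {0..real N}"
      by (intro at_within_nhd[of x "{..<real N}"]) auto
    then show "continuous (at x within {0..}) f"
      using initial[of N] \<open>x \<in> {0..}\<close> \<open>x < real N\<close>
      by (simp add: continuous_on_eq_continuous_within)
  qed
qed

lemma has_integral_sum_unit_intervals:
  fixes f :: "real \<Rightarrow> 'a::banach"
  assumes "\<And>n::nat. (f has_integral I n) {real n..real n + 1}"
  shows "(f has_integral (\<Sum>n<k. I n)) {0..real k}"
proof (induction k)
  case 0
  then show ?case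
    by (simp add: has_integral_refl)
next
  case (Suc k)
  have "(f has_integral (\<Sum>n<k. I n) + I k) {0..real k + 1}"
    using Suc assms[of k] by (intro has_integral_combine[of 0 "real k"]) auto
  then show ?case
    by (simp add: add.commute)
qed

lemma nonneg_integrable_on_atLeast_0:
  fixes f :: "real \<Rightarrow> real"
  assumes nonneg: "\<And>x. 0 \<le> x \<Longrightarrow> 0 \<le> f x"
    and levels: "\<And>n::nat. (f has_integral I n) {real n..real n + 1}"
    and "summable I"
  shows "f integrable_on {0..}"
proof -
  define g where "g k x = (if x \<in> {0..real k} then f x else 0)" for k x
  have g_integral: "(g k has_integral (\<Sum>n<k. I n)) {0..}" for k
    unfolding g_def using has_integral_sum_unit_intervals[OF levels, of k]
    by (subst has_integral_restrict) auto
  have "0 \<le> I n" for n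
    using nonneg by (rule has_integral_nonneg[OF levels[of n]]) simp
  then have sum_bound: "\<bar>\<Sum>n<k. I n\<bar> \<le> suminf I" for k
    using \<open>summable I\<close> by (simp add: sum_le_suminf sum_nonneg)
  have "f integrable_on {0..} \<and> ((\<lambda>k. integral {0..} (g k)) \<longlonglongrightarrow> integral {0..} f)"
  proof (rule monotone_convergence_increasing)
    show "g k integrable_on {0..}" for k
      using g_integral by blast
    show "g k x \<le> g (Suc k) x" if "x \<in> {0..}" for k x
      using nonneg that by (auto simp: g_def)
    show "(\<lambda>k. g k x) \<longlonglongrightarrow> f x" if "x \<in> {0..}" for x
    proof (rule tendsto_eventually, rule eventually_sequentiallyI)
      show "g k x = f x" if "nat \<lceil>x\<rceil> \<le> k" for k
        using that \<open>x \<in> {0..}\<close> by (simp add: g_def)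
    qed
    show "bounded (range (\<lambda>k. integral {0..} (g k)))"
      using sum_bound by (auto simp: bounded_iff integral_unique[OF g_integral])
  qed
  then show ?thesis
    by blast
qed

lemma summable_power_div_2:
  fixes q :: real
  assumes "0 \<le> q" and "q < 1"
  shows "summable (\<lambda>n. q ^ (n div 2))"
proof -
  have "(\<lambda>n. if even n then q ^ (n div 2) else q ^ ((n - 1) div 2)) = (\<lambda>n. q ^ (n div 2))"
    by (auto simp: fun_eq_iff elim!: oddE)
  moreover have "summable (\<lambda>n. if even n then q ^ (n div 2) else q ^ ((n - 1) div 2))"
    using sums_if[OF geometric_sums geometric_sums] assms by (auto simp: sums_iff)
  ultimately show ?thesis
    by simp
qed

lemma has_vector_derivative_reflect:
  fixes f :: "real \<Rightarrow> 'a::real_normed_vector"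
  assumes "(f has_vector_derivative f') (at (c - x) within {a..b})"
  shows "((\<lambda>x. f (c - x)) has_vector_derivative - f') (at x within {c - b..c - a})"
proof -
  have "((\<lambda>x. c - x) has_vector_derivative -1) (at x within {c - b..c - a})"
    by (auto intro!: derivative_eq_intros)
  moreover have "(f has_vector_derivative f') (at (c - x) within (\<lambda>x. c - x) ` {c - b..c - a})"
    using assms by (rule has_vector_derivative_within_subset) auto
  ultimately show ?thesis
    using vector_diff_chain_within by (fastforce simp: o_def)
qed

lemma absolutely_integrable_on_reflect_atLeast:
  fixes f :: "real \<Rightarrow> real"
  assumes "f absolutely_integrable_on {a..}"
  shows "(\<lambda>x. f (c - x)) absolutely_integrable_on {..c - a}"
proof -
  have image: "(\<lambda>x. c - x) ` {..c - a} = {a..}"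
    by (auto intro: image_eqI[of _ _ "c - y" for y])
  have "(\<lambda>x. \<bar>-1\<bar> * f (c - x)) absolutely_integrable_on {..c - a}
          \<and> integral {..c - a} (\<lambda>x. \<bar>-1\<bar> * f (c - x)) = integral {a..} f
        \<longleftrightarrow> f absolutely_integrable_on {a..} \<and> integral {a..} f = integral {a..} f"
    unfolding image[symmetric]
    by (rule has_absolute_integral_change_of_variables_1')
      (auto intro!: derivative_eq_intros simp: inj_on_def)
  then show ?thesis
    using assms by simp
qed

section \<open>Eigenvalues of \<open>2 \<times> 2\<close> matrices\<close>

lemma mat2_nth [simp]:
  "mat2 a b c d $ 1 $ 1 = a" "mat2 a b c d $ 1 $ 2 = b"
  "mat2 a b c d $ 2 $ 1 = c" "mat2 a b c d $ 2 $ 2 = d"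
  by (simp_all add: mat2_def)

lemma mat2_mult:
  "mat2 a b c d ** mat2 e f g h = mat2 (a*e + b*g) (a*f + b*h) (c*e + d*g) (c*f + d*h)"
  by (simp add: vec_eq_iff forall_2 matrix_matrix_mult_def sum_2)

lemma trace_2: "trace (A :: 'a::semiring_1^2^2) = A$1$1 + A$2$2"
  by (simp add: trace_def sum_2)

lemma matrix_vector_mult_2: "(A *v (v :: 'a::semiring_1^2)) $ i = A$i$1 * v$1 + A$i$2 * v$2"
  by (simp add: matrix_vector_mult_def sum_2)

lemma matrix_vector_mult_mat: "mat c *v v = c *s v"
  by (simp add: vec_eq_iff matrix_vector_mult_def mat_def if_distrib[of "\<lambda>x. x * _"] cong: if_cong)

lemma det_eq_0_iff_kernel:
  fixes A :: "'a::field^'n^'n"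
  shows "det A = 0 \<longleftrightarrow> (\<exists>v. v \<noteq> 0 \<and> A *v v = 0)"
proof -
  have "invertible A \<longleftrightarrow> (\<forall>v. A *v v = 0 \<longrightarrow> v = 0)"
    by (simp add: invertible_left_inverse matrix_left_invertible_ker)
  then show ?thesis
    using invertible_det_nz[of A] by blast
qed

lemma is_eigenvalue_iff_det: "is_eigenvalue A \<mu> \<longleftrightarrow> det (A - mat \<mu>) = 0"
  by (simp add: is_eigenvalue_def det_eq_0_iff_kernel matrix_vector_mult_diff_rdistrib
      matrix_vector_mult_mat)

lemma is_eigenvalue_2x2_iff: "is_eigenvalue A \<mu> \<longleftrightarrow> \<mu>\<^sup>2 - trace A * \<mu> + det A = 0"
  by (simp add: is_eigenvalue_iff_det det_2 trace_2 mat_def power2_eq_square algebra_simps)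

lemma is_eigenvalue_mult_commute:
  fixes A B :: "complex^2^2"
  shows "is_eigenvalue (A ** B) \<mu> \<longleftrightarrow> is_eigenvalue (B ** A) \<mu>"
  unfolding is_eigenvalue_2x2_iff det_mul trace_mul_sym[of A B] by (simp only: mult.commute)

definition eigenvector_2x2 :: "complex^2^2 \<Rightarrow> complex \<Rightarrow> complex^2" where
  "eigenvector_2x2 A \<mu> = vector [A$1$2, \<mu> - A$1$1]"

lemma is_eigenvalue_2x2_eigenvector:
  assumes "is_eigenvalue A \<mu>"
  shows "A *v eigenvector_2x2 A \<mu> = \<mu> *s eigenvector_2x2 A \<mu>"
proof -
  have "\<mu>\<^sup>2 - (A$1$1 + A$2$2) * \<mu> + (A$1$1 * A$2$2 - A$1$2 * A$2$1) = 0"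
    using assms by (simp add: is_eigenvalue_2x2_iff trace_2 det_2)
  then show ?thesis
    by (simp add: eigenvector_2x2_def vec_eq_iff forall_2 matrix_vector_mult_2 power2_eq_square
        algebra_simps)
qed

lemma complex_quadratic_factor:
  fixes t d :: complex
  obtains x1 x2 where "\<And>y. y\<^sup>2 - t * y + d = (y - x1) * (y - x2)"
proof
  define x1 where "x1 = (t + csqrt (t\<^sup>2 - 4 * d)) / 2"
  have "(csqrt (t\<^sup>2 - 4 * d))\<^sup>2 = t\<^sup>2 - 4 * d"
    by simp
  then show "y\<^sup>2 - t * y + d = (y - x1) * (y - (t - x1))" for y
    by (simp add: x1_def field_simps power2_eq_square)
qed

lemma mult_eq_square_less_iff:
  fixes a b r :: real
  assumes "a * b = r * r" and "0 \<le> a" "0 \<le> b" "0 < r"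
  shows "a < r \<longleftrightarrow> r < b"
  using assms
  by (smt (verit) mult_left_mono mult_right_mono mult_strict_left_mono mult_strict_right_mono)

lemma ex1_eigenvalue_inside_circle:
  fixes A :: "complex^2^2"
  assumes det: "cmod (det A) = r\<^sup>2" and "0 < r"
    and off_circle: "\<And>\<mu>. is_eigenvalue A \<mu> \<Longrightarrow> cmod \<mu> \<noteq> r"
  shows "\<exists>!\<mu>. is_eigenvalue A \<mu> \<and> cmod \<mu> < r"
proof -
  obtain x1 x2 where factor: "\<And>y. y\<^sup>2 - trace A * y + det A = (y - x1) * (y - x2)"
    using complex_quadratic_factor by blast
  have eigenvalue_iff: "is_eigenvalue A y \<longleftrightarrow> y = x1 \<or> y = x2" for y
    by (simp add: is_eigenvalue_2x2_iff factor)
  have "cmod x1 * cmod x2 = r * r"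
    using factor[of 0] det by (simp add: norm_mult power2_eq_square)
  then have "cmod x1 < r \<longleftrightarrow> r < cmod x2"
    using \<open>0 < r\<close> by (intro mult_eq_square_less_iff) auto
  moreover have "cmod x1 \<noteq> r" "cmod x2 \<noteq> r"
    using off_circle eigenvalue_iff by blast+
  ultimately have "cmod x1 < r \<longleftrightarrow> \<not> cmod x2 < r"
    by auto
  then show ?thesis
    using eigenvalue_iff by metis
qed

section \<open>The transfer matrix \<open>T\<^sub>0\<close>\<close>

lemma det_M0: "det (M0 la) = 1"
proof (cases "om la = 0")
  case True
  then show ?thesis
    by (simp add: M0_def det_2 cc_def cc'_def ss_def ss'_def sn_def)
next
  case False
  then show ?thesis
    using sin_cos_squared_add[of "om la"]
    by (simp add: M0_def det_2 cc_def cc'_def ss_def ss'_def sn_def power2_eq_square algebra_simps)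
qed

lemma det_Jmat: "det (Jmat \<delta>) = 1 / of_nat \<delta>"
  by (simp add: Jmat_def det_2)

lemma det_T0: "det (T0 \<alpha> \<beta> la) = 1 / (of_nat \<alpha> * of_nat \<beta>)"
  by (simp add: T0_def det_mul det_M0 det_Jmat)

lemma is_eigenvalue_T0_swap: "is_eigenvalue (T0 \<beta> \<alpha> la) \<mu> \<longleftrightarrow> is_eigenvalue (T0 \<alpha> \<beta> la) \<mu>"
proof -
  have "T0 \<alpha> \<beta> la = (Jmat \<beta> ** M0 la) ** (Jmat \<alpha> ** M0 la)" for \<alpha> \<beta>
    by (simp add: T0_def matrix_mul_assoc)
  then show ?thesis
    using is_eigenvalue_mult_commute by metis
qed

lemma T0_first_row:
  "T0 \<alpha> \<beta> la $ 1 $ 1 = (cc la)\<^sup>2 + ss la * cc' la / of_nat \<alpha>"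
  "T0 \<alpha> \<beta> la $ 1 $ 2 = ss la * cc la * (1 + 1 / of_nat \<alpha>)"
  by (simp_all add: T0_def M0_def Jmat_def mat2_mult ss'_def cc_def[symmetric] power2_eq_square
      algebra_simps)

lemma mu_minus_eigenvalue:
  assumes "\<delta>B \<ge> 1" and "\<delta>R \<ge> 1" and "la \<notin> sigma1 \<delta>B \<delta>R"
  shows "is_eigenvalue (T0 \<delta>B \<delta>R la) (mu_minus \<delta>B \<delta>R la)"
    and "(cmod (mu_minus \<delta>B \<delta>R la))\<^sup>2 * (real \<delta>B * real \<delta>R) < 1"
proof -
  define r where "r = 1 / sqrt (real (\<delta>B * \<delta>R))"
  have r_squared: "r\<^sup>2 = 1 / (real \<delta>B * real \<delta>R)"
    using assms(1,2) by (simp add: r_def power_divide)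
  have "cmod (det (T0 \<delta>B \<delta>R la)) = r\<^sup>2"
    by (simp add: r_squared det_T0 norm_divide norm_mult)
  moreover have "0 < r"
    using assms(1,2) by (simp add: r_def)
  moreover have "cmod \<mu> \<noteq> r" if "is_eigenvalue (T0 \<delta>B \<delta>R la) \<mu>" for \<mu>
    using assms(3) that by (auto simp: sigma1_def r_def)
  ultimately have "\<exists>!\<mu>. is_eigenvalue (T0 \<delta>B \<delta>R la) \<mu> \<and> cmod \<mu> < r"
    by (rule ex1_eigenvalue_inside_circle)
  then have "is_eigenvalue (T0 \<delta>B \<delta>R la) (mu_minus \<delta>B \<delta>R la) \<and> cmod (mu_minus \<delta>B \<delta>R la) < r"
    unfolding mu_minus_def r_def by (rule theI')
  moreover have "(cmod \<mu>)\<^sup>2 * (real \<delta>B * real \<delta>R) < 1" if "cmod \<mu> < r" for \<mu>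
  proof -
    have "(cmod \<mu>)\<^sup>2 < r\<^sup>2"
      using that by (intro power_strict_mono) auto
    then show ?thesis
      using assms(1,2) by (simp add: r_squared field_simps)
  qed
  ultimately show "is_eigenvalue (T0 \<delta>B \<delta>R la) (mu_minus \<delta>B \<delta>R la)"
    and "(cmod (mu_minus \<delta>B \<delta>R la))\<^sup>2 * (real \<delta>B * real \<delta>R) < 1"
    by auto
qed

section \<open>Solutions of \<open>-y'' = \<omega>\<^sup>2 y\<close> on one edge\<close>

definition ivp_sol :: "complex \<Rightarrow> complex^2 \<Rightarrow> real \<Rightarrow> complex" where
  "ivp_sol w v t = v$1 * cos (w * of_real t) + v$2 * sn w (of_real t)"

definition ivp_sol' :: "complex \<Rightarrow> complex^2 \<Rightarrow> real \<Rightarrow> complex" where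
  "ivp_sol' w v t = v$2 * cos (w * of_real t) - v$1 * w * sin (w * of_real t)"

lemma has_vector_derivative_of_real_shift:
  assumes "\<And>z. (g has_field_derivative g' z) (at z)"
  shows "((\<lambda>x. g (of_real (x - r))) has_vector_derivative g' (of_real (x - r))) (at x within S)"
proof -
  have "((\<lambda>z. z - of_real r) has_field_derivative 1) (at (of_real x))"
    by (auto intro!: derivative_eq_intros)
  from DERIV_chain2[OF assms this]
  have "((\<lambda>z. g (z - of_real r)) has_field_derivative g' (of_real x - of_real r)) (at (of_real x))"
    by simp
  then show ?thesis
    by (auto dest: has_vector_derivative_real_field)
qed

lemma has_vector_derivative_ivp_sol:
  "((\<lambda>x. ivp_sol w v (x - r)) has_vector_derivative ivp_sol' w v (x - r)) (at x within S)"
proof -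
  have "((\<lambda>z. v$1 * cos (w * z) + v$2 * sn w z) has_field_derivative
          v$2 * cos (w * z) - v$1 * w * sin (w * z)) (at z)" for z
    by (cases "w = 0") (auto intro!: derivative_eq_intros simp: sn_def fun_eq_iff algebra_simps)
  from has_vector_derivative_of_real_shift[OF this] show ?thesis
    by (simp add: ivp_sol_def ivp_sol'_def)
qed

lemma has_vector_derivative_ivp_sol':
  "((\<lambda>x. ivp_sol' w v (x - r)) has_vector_derivative - (w\<^sup>2) * ivp_sol w v (x - r)) (at x within S)"
proof -
  have "((\<lambda>z. v$2 * cos (w * z) - v$1 * w * sin (w * z)) has_field_derivative
          - (w\<^sup>2) * (v$1 * cos (w * z) + v$2 * sn w z)) (at z)" for z
    by (cases "w = 0")
      (auto intro!: derivative_eq_intros simp: sn_def power2_eq_square algebra_simps)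
  from has_vector_derivative_of_real_shift[OF this] show ?thesis
    by (simp add: ivp_sol_def ivp_sol'_def)
qed

lemma continuous_on_ivp_sol: "continuous_on S (\<lambda>x. ivp_sol w v (x - r))"
  using has_vector_derivative_ivp_sol
  by (blast intro: continuous_at_imp_continuous_on has_vector_derivative_continuous)

lemma ivp_sol_0 [simp]: "ivp_sol w v 0 = v$1" "ivp_sol' w v 0 = v$2"
  by (simp_all add: ivp_sol_def ivp_sol'_def sn_def)

lemma ivp_sol_scale: "ivp_sol w (c *s v) t = c * ivp_sol w v t"
  by (simp add: ivp_sol_def algebra_simps)

lemma ivp_sol_uminus: "ivp_sol w (- v) t = - ivp_sol w v t"
  by (simp add: ivp_sol_def algebra_simps)

lemma M0_mult_vec: "M0 la *v v = vector [ivp_sol (om la) v 1, ivp_sol' (om la) v 1]"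
  by (simp add: vec_eq_iff forall_2 matrix_vector_mult_2 M0_def ivp_sol_def ivp_sol'_def
      cc_def cc'_def ss_def ss'_def algebra_simps)

lemma Jmat_mult_vec: "Jmat \<delta> *v u = vector [u$1, u$2 / of_nat \<delta>]"
  by (simp add: vec_eq_iff forall_2 matrix_vector_mult_2 Jmat_def)

lemma Vfun_eq_ivp_sol:
  "Vfun \<delta>B \<delta>R x la = ivp_sol (om la) (eigenvector_2x2 (T0 \<delta>B \<delta>R la) (mu_minus \<delta>B \<delta>R la)) x"
  by (simp add: Vfun_def ivp_sol_def eigenvector_2x2_def T0_first_row diff_diff_eq)

lemma Ufun_eq_ivp_sol:
  "Ufun \<delta>B \<delta>R x la = - ivp_sol (om la) (eigenvector_2x2 (T0 \<delta>R \<delta>B la) (mu_minus \<delta>B \<delta>R la)) (1 - x)"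
  by (simp add: Ufun_def ivp_sol_def eigenvector_2x2_def T0_first_row diff_diff_eq)

section \<open>Radial solutions on \<open>\<T>\<^sub>0\<close>\<close>

text \<open>
  The Cauchy data \<open>(y(n\<^sup>+), y'(n\<^sup>+))\<close> of a radial solution at \<open>x = n\<close>; crossing the
  vertex at \<open>x = n + 1\<close> divides \<open>y'\<close> by the number of forward edges there.
\<close>

primrec radial_state :: "nat \<Rightarrow> nat \<Rightarrow> complex \<Rightarrow> complex^2 \<Rightarrow> nat \<Rightarrow> complex^2" where
  "radial_state \<alpha> \<beta> la v 0 = v"
| "radial_state \<alpha> \<beta> la v (Suc n) =
     Jmat (if even (Suc n) then \<beta> else \<alpha>) *v (M0 la *v radial_state \<alpha> \<beta> la v n)"

lemma radial_state_even:
  assumes "T0 \<alpha> \<beta> la *v v = \<mu> *s v"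
  shows "radial_state \<alpha> \<beta> la v (2 * k) = \<mu> ^ k *s v"
proof (induction k)
  case (Suc k)
  have "radial_state \<alpha> \<beta> la v (2 * Suc k) = T0 \<alpha> \<beta> la *v radial_state \<alpha> \<beta> la v (2 * k)"
    by (simp add: T0_def matrix_vector_mul_assoc matrix_mul_assoc)
  also have "\<dots> = \<mu> ^ Suc k *s v"
    using Suc assms by (simp add: vector_scalar_commute mult.commute)
  finally show ?case .
qed simp

lemma radial_state_periodic:
  assumes "T0 \<alpha> \<beta> la *v v = \<mu> *s v"
  shows "radial_state \<alpha> \<beta> la v n = \<mu> ^ (n div 2) *s radial_state \<alpha> \<beta> la v (n mod 2)"
proof (cases "even n")
  case True
  then show ?thesis
    using radial_state_even[OF assms, of "n div 2"] by simp
next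
  case False
  then obtain k where n: "n = Suc (2 * k)"
    by (metis oddE Suc_eq_plus1)
  have "radial_state \<alpha> \<beta> la v (Suc (2 * k)) = \<mu> ^ k *s radial_state \<alpha> \<beta> la v 1"
    using radial_state_even[OF assms, of k] by (simp add: vector_scalar_commute)
  then show ?thesis
    by (simp add: n)
qed

definition radial_sol :: "nat \<Rightarrow> nat \<Rightarrow> complex \<Rightarrow> complex^2 \<Rightarrow> real \<Rightarrow> complex" where
  "radial_sol \<alpha> \<beta> la v x = ivp_sol (om la) (radial_state \<alpha> \<beta> la v (nat \<lfloor>x\<rfloor>)) (x - real (nat \<lfloor>x\<rfloor>))"

definition radial_sol' :: "nat \<Rightarrow> nat \<Rightarrow> complex \<Rightarrow> complex^2 \<Rightarrow> nat \<Rightarrow> real \<Rightarrow> complex" where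
  "radial_sol' \<alpha> \<beta> la v n = (\<lambda>x. ivp_sol' (om la) (radial_state \<alpha> \<beta> la v n) (x - real n))"

lemma radial_sol_on_level:
  assumes "x \<in> {real n..real n + 1}"
  shows "radial_sol \<alpha> \<beta> la v x = ivp_sol (om la) (radial_state \<alpha> \<beta> la v n) (x - real n)"
proof (cases "x = real n + 1")
  case True
  then have "nat \<lfloor>x\<rfloor> = Suc n"
    by simp
  with True show ?thesis
    by (simp add: radial_sol_def M0_mult_vec Jmat_mult_vec)
next
  case False
  then have "\<lfloor>x\<rfloor> = int n"
    using assms by (simp add: floor_eq_iff)
  then show ?thesis
    by (simp add: radial_sol_def)
qed

lemma radial_sol_has_vector_derivative:
  assumes "x \<in> {real n..real n + 1}"
  shows "(radial_sol \<alpha> \<beta> la v has_vector_derivative radial_sol' \<alpha> \<beta> la v n x)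
           (at x within {real n..real n + 1})"
  unfolding radial_sol'_def
  by (rule has_vector_derivative_transform[OF assms _ has_vector_derivative_ivp_sol])
    (simp add: radial_sol_on_level)

lemma radial_sol'_has_vector_derivative:
  assumes "x \<in> {real n..real n + 1}"
  shows "(radial_sol' \<alpha> \<beta> la v n has_vector_derivative - la * radial_sol \<alpha> \<beta> la v x)
           (at x within {real n..real n + 1})"
  using has_vector_derivative_ivp_sol'[of "om la" _ "real n" x]
  by (simp add: radial_sol'_def radial_sol_on_level[OF assms] om_def)

lemma radial_sol'_jump:
  assumes "1 \<le> n"
  shows "radial_sol' \<alpha> \<beta> la v n (real n) = radial_sol' \<alpha> \<beta> la v (n - 1) (real n) / jump_coeff \<alpha> \<beta> n"
proof -
  obtain m where "n = Suc m"
    using assms by (metis Suc_le_D One_nat_def)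
  then show ?thesis
    by (simp add: radial_sol'_def M0_mult_vec Jmat_mult_vec jump_coeff_def)
qed

lemma continuous_on_radial_sol: "continuous_on {0..} (radial_sol \<alpha> \<beta> la v)"
proof (rule continuous_on_atLeast_0_from_unit_intervals)
  show "continuous_on {real n..real n + 1} (radial_sol \<alpha> \<beta> la v)" for n
    by (rule continuous_on_eq[OF continuous_on_ivp_sol]) (simp add: radial_sol_on_level)
qed

lemma edges0_le:
  assumes "1 \<le> \<alpha>"
  shows "edges0 \<alpha> \<beta> n \<le> \<alpha> * (\<alpha> * \<beta>) ^ (n div 2)"
proof -
  have "\<alpha> ^ ((n + 1) div 2) \<le> \<alpha> ^ Suc (n div 2)"
    using assms by (intro power_increasing) auto
  then show ?thesis
    by (simp add: edges0_def power_mult_distrib)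
qed

lemma weight0_on_level:
  assumes "x \<in> {real n..<real n + 1}"
  shows "weight0 \<alpha> \<beta> x = real (edges0 \<alpha> \<beta> n)"
proof -
  have "\<lfloor>x\<rfloor> = int n"
    using assms by (simp add: floor_eq_iff)
  then show ?thesis
    by (simp add: weight0_def)
qed

lemma radial_state_ivp_sol_bound:
  assumes "T0 \<alpha> \<beta> la *v v = \<mu> *s v"
  obtains K where "\<And>n t. t \<in> {0..1} \<Longrightarrow>
    cmod (ivp_sol (om la) (radial_state \<alpha> \<beta> la v n) t) \<le> cmod \<mu> ^ (n div 2) * K"
proof -
  have "bounded (\<Union>r<2. (\<lambda>t. ivp_sol (om la) (radial_state \<alpha> \<beta> la v r) t) ` {0..1})"
    using continuous_on_ivp_sol[of "{0..1}" _ _ 0]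
    by (intro bounded_UN ballI compact_imp_bounded compact_continuous_image) auto
  then obtain K where K: "\<And>r t. r < 2 \<Longrightarrow> t \<in> {0..1} \<Longrightarrow>
      cmod (ivp_sol (om la) (radial_state \<alpha> \<beta> la v r) t) \<le> K"
    unfolding bounded_iff by fastforce
  have "cmod (ivp_sol (om la) (radial_state \<alpha> \<beta> la v n) t) \<le> cmod \<mu> ^ (n div 2) * K"
    if "t \<in> {0..1}" for n t
    using K[OF _ that, of "n mod 2"]
    by (subst radial_state_periodic[OF assms])
      (simp add: ivp_sol_scale norm_mult norm_power mult_left_mono)
  then show ?thesis
    using that by blast
qed

lemma radial_level_bound:
  assumes "1 \<le> \<alpha>" and "T0 \<alpha> \<beta> la *v v = \<mu> *s v"
  obtains C where "\<And>n x. x \<in> {real n..real n + 1} \<Longrightarrow>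
    real (edges0 \<alpha> \<beta> n) * (cmod (ivp_sol (om la) (radial_state \<alpha> \<beta> la v n) (x - real n)))\<^sup>2
      \<le> C * ((cmod \<mu>)\<^sup>2 * (real \<alpha> * real \<beta>)) ^ (n div 2)"
proof -
  obtain K where K: "\<And>n t. t \<in> {0..1} \<Longrightarrow>
      cmod (ivp_sol (om la) (radial_state \<alpha> \<beta> la v n) t) \<le> cmod \<mu> ^ (n div 2) * K"
    using radial_state_ivp_sol_bound[OF assms(2)] by blast
  have "real (edges0 \<alpha> \<beta> n) * (cmod (ivp_sol (om la) (radial_state \<alpha> \<beta> la v n) (x - real n)))\<^sup>2
      \<le> \<alpha> * K\<^sup>2 * ((cmod \<mu>)\<^sup>2 * (real \<alpha> * real \<beta>)) ^ (n div 2)"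
    (is "?edges * ?value \<le> _") if "x \<in> {real n..real n + 1}" for n x
  proof -
    have "?value \<le> (cmod \<mu> ^ (n div 2) * K)\<^sup>2"
      using K[of "x - real n" n] that by (intro power_mono) auto
    moreover have "?edges \<le> \<alpha> * (real \<alpha> * real \<beta>) ^ (n div 2)"
      using edges0_le[OF assms(1), of \<beta> n] by (metis of_nat_le_iff of_nat_mult of_nat_power)
    ultimately have "?edges * ?value \<le> \<alpha> * (real \<alpha> * real \<beta>) ^ (n div 2) * (cmod \<mu> ^ (n div 2) * K)\<^sup>2"
      by (intro mult_mono) auto
    then show ?thesis
      by (simp add: power_mult_distrib power_mult[symmetric] mult.commute mult.left_commute)
  qed
  then show ?thesis
    using that by blast
qed

lemma radial_sol_square_integrable:
  assumes "1 \<le> \<alpha>" and "T0 \<alpha> \<beta> la *v v = \<mu> *s v"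
    and small: "(cmod \<mu>)\<^sup>2 * (real \<alpha> * real \<beta>) < 1"
  shows "(\<lambda>x. weight0 \<alpha> \<beta> x * (cmod (radial_sol \<alpha> \<beta> la v x))\<^sup>2) integrable_on {0..}"
proof -
  define q where "q = (cmod \<mu>)\<^sup>2 * (real \<alpha> * real \<beta>)"
  define h where "h n x = real (edges0 \<alpha> \<beta> n) *
      (cmod (ivp_sol (om la) (radial_state \<alpha> \<beta> la v n) (x - real n)))\<^sup>2" for n x
  obtain C where h_bound: "\<And>n x. x \<in> {real n..real n + 1} \<Longrightarrow> h n x \<le> C * q ^ (n div 2)"
    using radial_level_bound[OF assms(1,2)] unfolding h_def q_def by blast
  define I where "I n = integral {real n..real n + 1} (h n)" for n
  have h_integral: "(h n has_integral I n) {real n..real n + 1}" for n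
    unfolding I_def h_def
    by (intro integrable_integral integrable_continuous_interval continuous_intros
        continuous_on_ivp_sol)
  have levels: "((\<lambda>x. weight0 \<alpha> \<beta> x * (cmod (radial_sol \<alpha> \<beta> la v x))\<^sup>2) has_integral I n)
      {real n..real n + 1}" for n
    by (rule has_integral_spike_finite[of "{real n + 1}", OF _ _ h_integral])
      (auto simp: h_def weight0_on_level radial_sol_on_level)
  have I_bound: "norm (I n) \<le> C * q ^ (n div 2)" for n
  proof -
    have "0 \<le> I n"
      using h_integral by (rule has_integral_nonneg) (simp add: h_def)
    moreover have "I n \<le> integral {real n..real n + 1} (\<lambda>_. C * q ^ (n div 2))"
      unfolding I_def using h_integral h_bound by (intro integral_le) auto
    ultimately show ?thesis
      by simp
  qed
  have "summable (\<lambda>n. C * q ^ (n div 2))"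
    using small by (intro summable_mult summable_power_div_2) (simp_all add: q_def)
  then have "summable I"
    by (rule summable_comparison_test') (rule I_bound)
  then show ?thesis
    using nonneg_integrable_on_atLeast_0[OF _ levels] by (simp add: weight0_def)
qed

definition radial_solution_T0 ::
    "nat \<Rightarrow> nat \<Rightarrow> complex \<Rightarrow> (real \<Rightarrow> complex) \<Rightarrow> (nat \<Rightarrow> real \<Rightarrow> complex) \<Rightarrow> bool" where
  "radial_solution_T0 \<alpha> \<beta> la Y D \<longleftrightarrow>
     continuous_on {0..} Y
   \<and> (\<forall>n::nat. \<forall>x\<in>{real n..real n + 1}.
        (Y has_vector_derivative D n x) (at x within {real n..real n + 1})
      \<and> (D n has_vector_derivative (- la * Y x)) (at x within {real n..real n + 1}))
   \<and> (\<forall>n::nat. n \<ge> 1 \<longrightarrow> D n (real n) = D (n - 1) (real n) / jump_coeff \<alpha> \<beta> n)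
   \<and> (\<lambda>x. weight0 \<alpha> \<beta> x * (cmod (Y x))\<^sup>2) integrable_on {0..}"

lemma radial_solution_T0_radial_sol:
  assumes "1 \<le> \<alpha>" and "T0 \<alpha> \<beta> la *v v = \<mu> *s v"
    and "(cmod \<mu>)\<^sup>2 * (real \<alpha> * real \<beta>) < 1"
  shows "radial_solution_T0 \<alpha> \<beta> la (radial_sol \<alpha> \<beta> la v) (radial_sol' \<alpha> \<beta> la v)"
  unfolding radial_solution_T0_def
  by (intro conjI allI ballI impI continuous_on_radial_sol radial_sol_has_vector_derivative
      radial_sol'_has_vector_derivative radial_sol'_jump radial_sol_square_integrable[OF assms])

section \<open>Reflection onto \<open>\<T>\<^sub>1\<close>\<close>

definition radial_solution_T1 ::
    "nat \<Rightarrow> nat \<Rightarrow> complex \<Rightarrow> (real \<Rightarrow> complex) \<Rightarrow> (nat \<Rightarrow> real \<Rightarrow> complex) \<Rightarrow> bool" where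
  "radial_solution_T1 \<alpha> \<beta> la Y D \<longleftrightarrow>
     continuous_on {..1} Y
   \<and> (\<forall>k::nat. \<forall>x\<in>{- real k..1 - real k}.
        (Y has_vector_derivative D k x) (at x within {- real k..1 - real k})
      \<and> (D k has_vector_derivative (- la * Y x)) (at x within {- real k..1 - real k}))
   \<and> (\<forall>k::nat. D (k + 1) (- real k) = D k (- real k) / jump_coeff \<alpha> \<beta> k)
   \<and> (\<lambda>x. weight1 \<alpha> \<beta> x * (cmod (Y x))\<^sup>2) integrable_on {..1}"

lemma weight1_eq_weight0_reflect: "weight1 \<alpha> \<beta> x = weight0 \<beta> \<alpha> (1 - x)"
proof -
  have "\<lfloor>1 - x\<rfloor> = 1 - \<lceil>x\<rceil>"
    unfolding floor_eq_iff using le_of_int_ceiling[of x] ceiling_correct[of x] by auto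
  then show ?thesis
    by (simp add: weight0_def weight1_def edges0_def edges1_def)
qed

lemma jump_coeff_Suc_swap: "jump_coeff \<beta> \<alpha> (Suc k) = jump_coeff \<alpha> \<beta> k"
  by (simp add: jump_coeff_def)

lemma radial_solution_T1_reflect:
  assumes "radial_solution_T0 \<beta> \<alpha> la Y D"
  shows "radial_solution_T1 \<alpha> \<beta> la (\<lambda>x. Y (1 - x)) (\<lambda>k x. - D k (1 - x))"
proof -
  have cont: "continuous_on {0..} Y"
    and ode: "\<And>n x. x \<in> {real n..real n + 1} \<Longrightarrow>
      (Y has_vector_derivative D n x) (at x within {real n..real n + 1})
      \<and> (D n has_vector_derivative (- la * Y x)) (at x within {real n..real n + 1})"
    and jump: "\<And>n. 1 \<le> n \<Longrightarrow> D n (real n) = D (n - 1) (real n) / jump_coeff \<beta> \<alpha> n"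
    and square: "(\<lambda>x. weight0 \<beta> \<alpha> x * (cmod (Y x))\<^sup>2) integrable_on {0..}"
    using assms unfolding radial_solution_T0_def by blast+
  have "continuous_on {..1} (\<lambda>x. Y (1 - x))"
    by (rule continuous_on_compose2[OF cont continuous_on_diff[OF continuous_on_const continuous_on_id]])
      auto
  moreover have "((\<lambda>x. Y (1 - x)) has_vector_derivative - D k (1 - x))
        (at x within {- real k..1 - real k})
      \<and> ((\<lambda>x. - D k (1 - x)) has_vector_derivative - la * Y (1 - x))
        (at x within {- real k..1 - real k})"
    if "x \<in> {- real k..1 - real k}" for k x
  proof -
    have "1 - x \<in> {real k..real k + 1}"
      using that by auto
    from ode[OF this] show ?thesis
      using has_vector_derivative_reflect[of Y _ 1 x "real k" "real k + 1"]
        has_vector_derivative_minus[OF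
          has_vector_derivative_reflect[of "D k" _ 1 x "real k" "real k + 1"]]
      by simp
  qed
  moreover have "D (Suc k) (real (Suc k)) = D k (real (Suc k)) / jump_coeff \<alpha> \<beta> k" for k
    using jump[of "Suc k"] by (simp add: jump_coeff_Suc_swap)
  moreover have "(\<lambda>x. weight1 \<alpha> \<beta> x * (cmod (Y (1 - x)))\<^sup>2) integrable_on {..1}"
  proof -
    have "(\<lambda>x. weight0 \<beta> \<alpha> x * (cmod (Y x))\<^sup>2) absolutely_integrable_on {0..}"
      using square by (rule nonnegative_absolutely_integrable_1) (simp add: weight0_def)
    from absolutely_integrable_on_reflect_atLeast[OF this, of 1] show ?thesis
      by (simp add: weight1_eq_weight0_reflect absolutely_integrable_on_def)
  qed
  ultimately show ?thesis
    unfolding radial_solution_T1_def by simp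
qed

theorem theorem4p4:
  fixes \<delta>B \<delta>R :: nat and la :: complex
  assumes "\<delta>B \<ge> 1" and "\<delta>R \<ge> 1"
    and "la \<notin> sigma1 \<delta>B \<delta>R"
  shows
    "(\<exists>(Y :: real \<Rightarrow> complex) (D :: nat \<Rightarrow> real \<Rightarrow> complex).
        (\<forall>x\<in>{0..1}. Y x = Vfun \<delta>B \<delta>R x la)
      \<and> continuous_on {0..} Y
      \<and> (\<forall>n::nat. \<forall>x\<in>{real n..real n + 1}.
            (Y has_vector_derivative D n x) (at x within {real n..real n + 1})
          \<and> (D n has_vector_derivative (- la * Y x)) (at x within {real n..real n + 1}))
      \<and> (\<forall>n::nat. n \<ge> 1 \<longrightarrow> D n (real n) = D (n - 1) (real n) / jump_coeff \<delta>B \<delta>R n)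
      \<and> (\<lambda>x. weight0 \<delta>B \<delta>R x * (cmod (Y x))\<^sup>2) integrable_on {0..})
   \<and> (\<exists>(Y :: real \<Rightarrow> complex) (D :: nat \<Rightarrow> real \<Rightarrow> complex).
        (\<forall>x\<in>{0..1}. Y x = Ufun \<delta>B \<delta>R x la)
      \<and> continuous_on {..1} Y
      \<and> (\<forall>k::nat. \<forall>x\<in>{- real k..1 - real k}.
            (Y has_vector_derivative D k x) (at x within {- real k..1 - real k})
          \<and> (D k has_vector_derivative (- la * Y x)) (at x within {- real k..1 - real k}))
      \<and> (\<forall>k::nat. D (k + 1) (- real k) = D k (- real k) / jump_coeff \<delta>B \<delta>R k)
      \<and> (\<lambda>x. weight1 \<delta>B \<delta>R x * (cmod (Y x))\<^sup>2) integrable_on {..1})"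
proof -
  define \<mu> where "\<mu> = mu_minus \<delta>B \<delta>R la"
  define vV where "vV = eigenvector_2x2 (T0 \<delta>B \<delta>R la) \<mu>"
  define vU where "vU = - eigenvector_2x2 (T0 \<delta>R \<delta>B la) \<mu>"
  have eigenvalue: "is_eigenvalue (T0 \<delta>B \<delta>R la) \<mu>" "is_eigenvalue (T0 \<delta>R \<delta>B la) \<mu>"
    using mu_minus_eigenvalue(1)[OF assms] is_eigenvalue_T0_swap by (auto simp: \<mu>_def)
  have small: "(cmod \<mu>)\<^sup>2 * (real \<delta>B * real \<delta>R) < 1" "(cmod \<mu>)\<^sup>2 * (real \<delta>R * real \<delta>B) < 1"
    using mu_minus_eigenvalue(2)[OF assms] by (simp_all add: \<mu>_def mult.commute)
  have "T0 \<delta>B \<delta>R la *v vV = \<mu> *s vV"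
    unfolding vV_def by (rule is_eigenvalue_2x2_eigenvector[OF eigenvalue(1)])
  from radial_solution_T0_radial_sol[OF assms(1) this small(1)]
  have "\<exists>Y D. (\<forall>x\<in>{0..1}. Y x = Vfun \<delta>B \<delta>R x la) \<and> radial_solution_T0 \<delta>B \<delta>R la Y D"
    by (intro exI conjI[rotated])
      (auto simp: radial_sol_on_level[of _ 0] Vfun_eq_ivp_sol vV_def \<mu>_def)
  moreover have "T0 \<delta>R \<delta>B la *v vU = \<mu> *s vU"
    unfolding vU_def vector_sneg_minus1 vector_scalar_commute
      is_eigenvalue_2x2_eigenvector[OF eigenvalue(2)]
    by (simp only: vector_smult_assoc mult.commute)
  from radial_solution_T1_reflect[OF radial_solution_T0_radial_sol[OF assms(2) this small(2)]]
  have "\<exists>Y D. (\<forall>x\<in>{0..1}. Y x = Ufun \<delta>B \<delta>R x la) \<and> radial_solution_T1 \<delta>B \<delta>R la Y D"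
    by (intro exI conjI[rotated])
      (auto simp: radial_sol_on_level[of "1 - _" 0] Ufun_eq_ivp_sol ivp_sol_uminus vU_def \<mu>_def)
  ultimately show ?thesis
    unfolding radial_solution_T0_def radial_solution_T1_def by (rule conjI)
qed

end
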